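(* Let $P\in\mathbb{R}_+^{n\times n}$ be sub-stochastic and $w\in\mathbb{R}^n_+$. For $c\in\mathbb{R}^n$ let $\underline x(c)$ and $\overline x(c)$ be the minimal and maximal solutions (entrywise order) of $x=S_0^w(P'x+c)$. Let $\mathcal T\cup\mathcal S_1\cup\dots\cup\mathcal S_m$ be the partition of $\{1,\dots,n\}$ into the transient part and the irreducible trapping sets of $\mathcal G_P$, and for each $l$ let $\pi^{(l)}$ be the invariant probability vector of the block $P_{\mathcal S_l\mathcal S_l}$ (i.e. $\pi^{(l)}\ge0$, $\mathbbm{1}'\pi^{(l)}=1$, $(P_{\mathcal S_l\mathcal S_l})'\pi^{(l)}=\pi^{(l)}$). Then for $p\ge1$, $$\max_{c\in\mathbb{R}^n}\|\overline x(c)-\underline x(c)\|_p^p=\sum_{l=1}^m\left(\min_{i\in\mathcal S_l}\frac{w_i}{\pi^{(l)}_i}\right)^p\|\pi^{(l)}\|_p^p.$$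
   Context: $P$ sub-stochastic: nonnegative with $P\mathbbm{1}\le\mathbbm{1}$. $(S_0^w(x))_i=\min\{\max\{x_i,0\},w_i\}$; $'$ is transpose; $P_{\mathcal A\mathcal B}$ is the restriction of $P$ to rows $\mathcal A$ and columns $\mathcal B$. The graph $\mathcal G_P$ has nodes $\{1,\dots,n\}$ and a link $(i,j)$ iff $P_{ij}>0$. A trapping set is a nonempty $\mathcal S$ with $P_{ij}=0$ for $i\in\mathcal S$, $j\notin\mathcal S$; irreducible if it strictly contains no other trapping set; the transient part is the set of nodes in no irreducible trapping set. The statement presupposes (as the paper does) that each block $P_{\mathcal S_l\mathcal S_l}$ has an invariant probability vector $\pi^{(l)}$. *)

theory Defs
  imports "HOL-Analysis.Analysis"
begin

text \<open>Matrices are real^'n^'n, indexed by a finite type 'n standing for {1..n}.\<close>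

definition substochastic :: "real^'n^'n \<Rightarrow> bool" where
  "substochastic P \<longleftrightarrow> (\<forall>i j. 0 \<le> P$i$j) \<and> (\<forall>i. (\<Sum>j\<in>UNIV. P$i$j) \<le> 1)"

definition sat0 :: "real^'n \<Rightarrow> real^'n \<Rightarrow> real^'n" where
  "sat0 w x = (\<chi> i. min (max (x$i) 0) (w$i))"

definition is_solution :: "real^'n^'n \<Rightarrow> real^'n \<Rightarrow> real^'n \<Rightarrow> real^'n \<Rightarrow> bool" where
  "is_solution P w c x \<longleftrightarrow> x = sat0 w (transpose P *v x + c)"

definition vec_le :: "real^'n \<Rightarrow> real^'n \<Rightarrow> bool" where
  "vec_le x y \<longleftrightarrow> (\<forall>i. x$i \<le> y$i)"

definition is_min_solution :: "real^'n^'n \<Rightarrow> real^'n \<Rightarrow> real^'n \<Rightarrow> real^'n \<Rightarrow> bool" where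
  "is_min_solution P w c x \<longleftrightarrow> is_solution P w c x \<and> (\<forall>y. is_solution P w c y \<longrightarrow> vec_le x y)"

definition is_max_solution :: "real^'n^'n \<Rightarrow> real^'n \<Rightarrow> real^'n \<Rightarrow> real^'n \<Rightarrow> bool" where
  "is_max_solution P w c x \<longleftrightarrow> is_solution P w c x \<and> (\<forall>y. is_solution P w c y \<longrightarrow> vec_le y x)"

definition link :: "real^'n^'n \<Rightarrow> 'n \<Rightarrow> 'n \<Rightarrow> bool" where
  "link P i j \<longleftrightarrow> P$i$j > 0"

definition trapping_set :: "real^'n^'n \<Rightarrow> 'n set \<Rightarrow> bool" where
  "trapping_set P S \<longleftrightarrow> S \<noteq> {} \<and> (\<forall>i\<in>S. \<forall>j. j \<notin> S \<longrightarrow> \<not> link P i j)"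

definition irreducible_trapping_set :: "real^'n^'n \<Rightarrow> 'n set \<Rightarrow> bool" where
  "irreducible_trapping_set P S \<longleftrightarrow>
     trapping_set P S \<and> \<not> (\<exists>S'. trapping_set P S' \<and> S' \<subset> S)"

definition invariant_prob :: "real^'n^'n \<Rightarrow> 'n set \<Rightarrow> ('n \<Rightarrow> real) \<Rightarrow> bool" where
  "invariant_prob P S \<pi> \<longleftrightarrow>
     (\<forall>i\<in>S. 0 \<le> \<pi> i) \<and> (\<Sum>i\<in>S. \<pi> i) = 1 \<and>
     (\<forall>j\<in>S. (\<Sum>i\<in>S. P$i$j * \<pi> i) = \<pi> j)"

definition pnorm_pow :: "real \<Rightarrow> real^'n \<Rightarrow> real" where
  "pnorm_pow p v = (\<Sum>i\<in>UNIV. \<bar>v$i\<bar> powr p)"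

end

theory Submission
  imports Defs
begin

text \<open>The gap \<open>d = xhi c - xlo c\<close> is nonnegative and bounded by \<open>w\<close>, and since
  the saturation is nonexpansive it satisfies \<open>d \<le> P' d\<close>. As \<open>P'\<close> cannot increase
  the total mass of a nonnegative vector, in fact \<open>d = P' d\<close>. The support of such an
  invariant vector is covered by the irreducible trapping sets, and on each of them \<open>d\<close>
  is a multiple \<open>t \<pi>\<close> of the invariant probability vector \<open>\<pi>\<close> of the block, with
  \<open>t \<le> min\<^sub>i w\<^sub>i / \<pi>\<^sub>i\<close> because \<open>d \<le> w\<close>. Conversely, placing exactly these maximal
  multiples on all irreducible trapping sets gives a solution for \<open>c = 0\<close>, where the
  minimal solution is \<open>0\<close>; so the bound is attained.\<close>

section \<open>Invariant vectors and irreducible trapping sets\<close>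

definition link_closed :: "real^'n^'n \<Rightarrow> 'n set \<Rightarrow> bool" where
  "link_closed P A \<longleftrightarrow> (\<forall>i\<in>A. \<forall>j. j \<notin> A \<longrightarrow> \<not> link P i j)"

definition invariant_on :: "real^'n^'n \<Rightarrow> 'n set \<Rightarrow> ('n \<Rightarrow> real) \<Rightarrow> bool" where
  "invariant_on P B v \<longleftrightarrow> (\<forall>j\<in>B. (\<Sum>i\<in>B. P$i$j * v i) = v j)"

lemma substochastic_nonneg: "substochastic P \<Longrightarrow> 0 \<le> P$i$j"
  by (simp add: substochastic_def)

lemma substochastic_row_sum: "substochastic P \<Longrightarrow> (\<Sum>j\<in>UNIV. P$i$j) \<le> 1"
  by (simp add: substochastic_def)

lemma trapping_set_iff_link_closed: "trapping_set P S \<longleftrightarrow> S \<noteq> {} \<and> link_closed P S"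
  by (auto simp: trapping_set_def link_closed_def)

lemma link_closed_Union: "(\<And>A. A \<in> F \<Longrightarrow> link_closed P A) \<Longrightarrow> link_closed P (\<Union>F)"
  by (auto simp: link_closed_def)

lemma link_closed_entry_zero:
  assumes "\<And>i j. 0 \<le> P$i$j" "link_closed P A" "i \<in> A" "j \<notin> A"
  shows "P$i$j = 0"
  using assms unfolding link_closed_def link_def by (meson not_less order_antisym)

lemma invariant_prob_iff:
  "invariant_prob P S q \<longleftrightarrow> (\<forall>i\<in>S. 0 \<le> q i) \<and> sum q S = 1 \<and> invariant_on P S q"
  by (simp add: invariant_prob_def invariant_on_def)

lemma irreducible_trapping_set_eq:
  assumes "irreducible_trapping_set P S\<^sub>1" "irreducible_trapping_set P S\<^sub>2" "S\<^sub>1 \<inter> S\<^sub>2 \<noteq> {}"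
  shows "S\<^sub>1 = S\<^sub>2"
proof -
  have "trapping_set P (S\<^sub>1 \<inter> S\<^sub>2)"
    using assms unfolding irreducible_trapping_set_def trapping_set_def by blast
  then show ?thesis
    using assms(1,2) unfolding irreducible_trapping_set_def by blast
qed

lemma trapping_set_contains_irreducible:
  fixes P :: "real^'n^'n"
  assumes "trapping_set P S"
  shows "\<exists>S'\<subseteq>S. irreducible_trapping_set P S'"
  using assms
proof (induction "card S" arbitrary: S rule: less_induct)
  case less
  show ?case
  proof (cases "irreducible_trapping_set P S")
    case False
    then obtain S' where "trapping_set P S'" "S' \<subset> S"
      using less.prems unfolding irreducible_trapping_set_def by blast
    then show ?thesis
      using less.hyps[of S'] by (meson finite psubset_card_mono order.trans psubset_imp_subset)
  qed blast
qed

lemma irreducible_invariant_vanishes: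
  fixes P :: "real^'n^'n"
  assumes nonneg: "\<And>i j. 0 \<le> P$i$j" and irr: "irreducible_trapping_set P S"
    and v_nonneg: "\<forall>i\<in>S. 0 \<le> v i" and inv: "invariant_on P S v"
    and k: "k \<in> S" "v k = 0"
  shows "\<forall>i\<in>S. v i = 0"
proof (rule ccontr)
  define N where "N = {i\<in>S. v i \<noteq> 0}"
  assume "\<not> (\<forall>i\<in>S. v i = 0)"
  then have "N \<noteq> {}" by (auto simp: N_def)
  \<comment> \<open>An entry where \<open>v\<close> vanishes receives mass only from entries where it vanishes.\<close>
  moreover have "link_closed P N"
    unfolding link_closed_def
  proof (intro ballI allI impI)
    fix i j assume i: "i \<in> N" and j: "j \<notin> N"
    show "\<not> link P i j"
    proof (cases "j \<in> S")
      case False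
      then show ?thesis
        using irr i by (auto simp: irreducible_trapping_set_def trapping_set_def N_def)
    next
      case True
      with j inv have "(\<Sum>i\<in>S. P$i$j * v i) = 0" by (simp add: N_def invariant_on_def)
      then have "P$i$j = 0"
        using i nonneg v_nonneg by (auto simp: N_def sum_nonneg_eq_0_iff)
      then show ?thesis by (simp add: link_def)
    qed
  qed
  moreover have "N \<subset> S" using k by (auto simp: N_def)
  ultimately show False
    using irr by (auto simp: irreducible_trapping_set_def trapping_set_iff_link_closed)
qed

lemma invariant_prob_pos:
  fixes P :: "real^'n^'n"
  assumes nonneg: "\<And>i j. 0 \<le> P$i$j" and irr: "irreducible_trapping_set P S"
    and q: "invariant_prob P S q" and i: "i \<in> S"
  shows "0 < q i"
proof (rule ccontr)
  assume "\<not> 0 < q i"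
  with q i have "q i = 0" by (force simp: invariant_prob_iff)
  then have "\<forall>j\<in>S. q j = 0"
    using irreducible_invariant_vanishes[OF nonneg irr _ _ i] q by (simp add: invariant_prob_iff)
  then show False using q by (simp add: invariant_prob_iff)
qed

lemma irreducible_invariant_proportional:
  fixes P :: "real^'n^'n"
  assumes nonneg: "\<And>i j. 0 \<le> P$i$j" and irr: "irreducible_trapping_set P S"
    and q: "invariant_prob P S q"
    and v_nonneg: "\<forall>i\<in>S. 0 \<le> v i" and v: "invariant_on P S v"
  obtains t where "0 \<le> t" "\<forall>i\<in>S. v i = t * q i"
proof -
  have q_pos: "0 < q i" if "i \<in> S" for i
    using invariant_prob_pos[OF nonneg irr q that] .
  have "S \<noteq> {}" using irr by (simp add: irreducible_trapping_set_def trapping_set_def)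
  \<comment> \<open>Removing the largest multiple of \<open>q\<close> below \<open>v\<close> leaves a nonnegative invariant
    vector with a zero entry.\<close>
  define t where "t = Min ((\<lambda>i. v i / q i) ` S)"
  have "t \<in> (\<lambda>i. v i / q i) ` S" unfolding t_def using \<open>S \<noteq> {}\<close> by (intro Min_in) auto
  then obtain k where k: "k \<in> S" "t = v k / q k" by blast
  define e where "e i = v i - t * q i" for i
  have e_nonneg: "\<forall>i\<in>S. 0 \<le> e i"
  proof
    fix i assume "i \<in> S"
    then have "t \<le> v i / q i" unfolding t_def by simp
    then show "0 \<le> e i" using q_pos[OF \<open>i \<in> S\<close>] by (simp add: e_def pos_le_divide_eq)
  qed
  have "invariant_on P S e"
    unfolding invariant_on_def
  proof
    fix j assume "j \<in> S"
    have "(\<Sum>i\<in>S. P$i$j * e i) = (\<Sum>i\<in>S. P$i$j * v i) - t * (\<Sum>i\<in>S. P$i$j * q i)"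
      by (simp add: e_def sum_subtractf sum_distrib_left algebra_simps)
    then show "(\<Sum>i\<in>S. P$i$j * e i) = e j"
      using v q \<open>j \<in> S\<close> by (simp add: invariant_on_def invariant_prob_iff e_def)
  qed
  moreover have "e k = 0" using k q_pos[OF k(1)] by (simp add: e_def)
  ultimately have "\<forall>i\<in>S. e i = 0"
    using irreducible_invariant_vanishes[OF nonneg irr e_nonneg] k(1) by blast
  moreover have "0 \<le> t" using k v_nonneg q_pos[OF k(1)] by simp
  ultimately show thesis using that[of t] by (simp add: e_def)
qed

lemma positive_invariant_link_closed:
  fixes P :: "real^'n^'n"
  assumes P: "substochastic P" and pos: "\<forall>i\<in>B. 0 < v i" and inv: "invariant_on P B v"
  shows "link_closed P B"
proof -
  \<comment> \<open>Summing the invariance equations, every row of \<open>P\<close> restricted to \<open>B\<close> has full mass \<open>1\<close>.\<close>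
  have "(\<Sum>i\<in>B. v i * (\<Sum>j\<in>B. P$i$j)) = (\<Sum>j\<in>B. \<Sum>i\<in>B. P$i$j * v i)"
    by (subst sum.swap) (simp add: sum_distrib_left mult.commute)
  also have "\<dots> = (\<Sum>i\<in>B. v i)" using inv by (simp add: invariant_on_def)
  finally have mass: "(\<Sum>i\<in>B. v i * (1 - (\<Sum>j\<in>B. P$i$j))) = 0"
    by (simp add: right_diff_distrib sum_subtractf)
  have row_le: "(\<Sum>j\<in>B. P$i$j) \<le> 1" for i
  proof -
    have "(\<Sum>j\<in>B. P$i$j) \<le> (\<Sum>j\<in>UNIV. P$i$j)"
      by (rule sum_mono2) (simp_all add: substochastic_nonneg[OF P])
    also have "\<dots> \<le> 1" by (rule substochastic_row_sum[OF P])
    finally show ?thesis .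
  qed
  have row_B: "(\<Sum>j\<in>B. P$i$j) = 1" if "i \<in> B" for i
  proof -
    have "\<forall>i\<in>B. 0 \<le> v i * (1 - (\<Sum>j\<in>B. P$i$j))"
      using pos row_le by (simp add: less_imp_le)
    then have "v i * (1 - (\<Sum>j\<in>B. P$i$j)) = 0"
      using mass that by (simp add: sum_nonneg_eq_0_iff)
    then show ?thesis using pos that by fastforce
  qed
  show ?thesis
    unfolding link_closed_def
  proof (intro ballI allI impI)
    fix i j assume "i \<in> B" "j \<notin> B"
    have "(\<Sum>j\<in>UNIV. P$i$j) = (\<Sum>j\<in>UNIV - B. P$i$j) + (\<Sum>j\<in>B. P$i$j)"
      using sum.subset_diff[of B UNIV "\<lambda>j. P$i$j"] by simp
    moreover have "0 \<le> (\<Sum>j\<in>UNIV - B. P$i$j)" by (simp add: sum_nonneg substochastic_nonneg[OF P])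
    ultimately have "(\<Sum>j\<in>UNIV - B. P$i$j) = 0"
      using row_B[OF \<open>i \<in> B\<close>] substochastic_row_sum[OF P, of i] by linarith
    then have "P$i$j = 0"
      using \<open>j \<notin> B\<close> by (simp add: sum_nonneg_eq_0_iff substochastic_nonneg[OF P])
    then show "\<not> link P i j" by (simp add: link_def)
  qed
qed

lemma subinvariant_imp_invariant:
  fixes P :: "real^'n^'n"
  assumes P: "substochastic P" and d_nonneg: "\<And>i. 0 \<le> d i"
    and sub: "\<And>j. d j \<le> (\<Sum>i\<in>UNIV. P$i$j * d i)"
  shows "invariant_on P UNIV d"
proof -
  \<comment> \<open>\<open>P'\<close> does not increase the total mass of a nonnegative vector.\<close>
  have "(\<Sum>j\<in>UNIV. \<Sum>i\<in>UNIV. P$i$j * d i) = (\<Sum>i\<in>UNIV. d i * (\<Sum>j\<in>UNIV. P$i$j))"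
    by (subst sum.swap) (simp add: sum_distrib_left mult.commute)
  also have "\<dots> \<le> (\<Sum>i\<in>UNIV. d i)"
    by (rule sum_mono) (simp add: d_nonneg mult_left_le substochastic_row_sum[OF P])
  finally have "(\<Sum>j\<in>UNIV. (\<Sum>i\<in>UNIV. P$i$j * d i) - d j) \<le> 0"
    by (simp add: sum_subtractf)
  moreover have "0 \<le> (\<Sum>i\<in>UNIV. P$i$j * d i) - d j" for j
    using sub[of j] by simp
  ultimately have "\<forall>j\<in>UNIV. (\<Sum>i\<in>UNIV. P$i$j * d i) - d j = 0"
    using sum_nonneg_eq_0_iff[of UNIV "\<lambda>j. (\<Sum>i\<in>UNIV. P$i$j * d i) - d j"]
    by (simp add: order_antisym sum_nonneg)
  then show ?thesis by (simp add: invariant_on_def)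
qed

lemma invariant_on_support_diff:
  fixes P :: "real^'n^'n"
  assumes nonneg: "\<And>i j. 0 \<le> P$i$j" and d_nonneg: "\<And>i. 0 \<le> d i"
    and inv: "invariant_on P UNIV d" and A: "link_closed P A"
  shows "invariant_on P ({i. 0 < d i} - A) d"
  unfolding invariant_on_def
proof
  fix j assume j: "j \<in> {i. 0 < d i} - A"
  have "(\<Sum>i\<in>{i. 0 < d i} - A. P$i$j * d i) = (\<Sum>i\<in>UNIV. P$i$j * d i)"
  proof (rule sum.mono_neutral_left)
    show "\<forall>i\<in>UNIV - ({i. 0 < d i} - A). P$i$j * d i = 0"
      using d_nonneg link_closed_entry_zero[OF nonneg A] j by (metis DiffE DiffI mem_Collect_eq
          mult_eq_0_iff order_neq_le_trans)
  qed simp_all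
  also have "\<dots> = d j" using inv by (simp add: invariant_on_def)
  finally show "(\<Sum>i\<in>{i. 0 < d i} - A. P$i$j * d i) = d j" .
qed

lemma invariant_support_in_irreducible:
  fixes P :: "real^'n^'n"
  assumes P: "substochastic P" and d_nonneg: "\<And>i. 0 \<le> d i"
    and inv: "invariant_on P UNIV d" and "0 < d i"
  shows "\<exists>S. irreducible_trapping_set P S \<and> i \<in> S"
proof (rule ccontr)
  assume uncovered: "\<not> ?thesis"
  define Q where "Q = {i. 0 < d i}"
  define A where "A = \<Union>{S. irreducible_trapping_set P S \<and> S \<subseteq> Q}"
  \<comment> \<open>The rest of the support is closed as well; were it nonempty, it would contain a
    further irreducible trapping set.\<close>
  have "link_closed P A"
    unfolding A_def
    by (rule link_closed_Union) (auto simp: irreducible_trapping_set_def trapping_set_iff_link_closed)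
  then have "invariant_on P (Q - A) d"
    unfolding Q_def by (rule invariant_on_support_diff[OF substochastic_nonneg[OF P] d_nonneg inv])
  then have "link_closed P (Q - A)"
    by (intro positive_invariant_link_closed[OF P]) (auto simp: Q_def)
  moreover have "i \<in> Q - A" using \<open>0 < d i\<close> uncovered by (auto simp: Q_def A_def)
  ultimately have "trapping_set P (Q - A)" by (auto simp: trapping_set_iff_link_closed)
  then obtain S where S: "irreducible_trapping_set P S" "S \<subseteq> Q - A"
    using trapping_set_contains_irreducible by blast
  then have "S \<subseteq> A" by (auto simp: A_def)
  with S show False by (auto simp: irreducible_trapping_set_def trapping_set_def)
qed

lemma invariant_on_irreducible:
  fixes P :: "real^'n^'n"
  assumes P: "substochastic P" and d_nonneg: "\<And>i. 0 \<le> d i"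
    and inv: "invariant_on P UNIV d" and irr: "irreducible_trapping_set P S"
  shows "invariant_on P S d"
  unfolding invariant_on_def
proof
  fix j assume j: "j \<in> S"
  have "P$i$j * d i = 0" if "i \<notin> S" for i
  proof (cases "0 < d i")
    case True
    then obtain S' where S': "irreducible_trapping_set P S'" "i \<in> S'"
      using invariant_support_in_irreducible[OF P d_nonneg inv] by blast
    then have "j \<notin> S'" using irreducible_trapping_set_eq[OF S'(1) irr] j \<open>i \<notin> S\<close> by blast
    then have "\<not> link P i j" using S' by (auto simp: irreducible_trapping_set_def trapping_set_def)
    then show ?thesis using substochastic_nonneg[OF P, of i j] by (simp add: link_def)
  next
    case False
    then show ?thesis using d_nonneg[of i] by simp
  qed
  then have "(\<Sum>i\<in>S. P$i$j * d i) = (\<Sum>i\<in>UNIV. P$i$j * d i)"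
    by (intro sum.mono_neutral_left) auto
  then show "(\<Sum>i\<in>S. P$i$j * d i) = d j" using inv by (simp add: invariant_on_def)
qed

section \<open>The upper bound\<close>

lemma sum_over_irreducible_trapping_sets:
  fixes P :: "real^'n^'n" and f :: "'n \<Rightarrow> real"
  assumes "\<And>i. \<forall>S. irreducible_trapping_set P S \<longrightarrow> i \<notin> S \<Longrightarrow> f i = 0"
  shows "(\<Sum>i\<in>UNIV. f i) = (\<Sum>S\<in>{S. irreducible_trapping_set P S}. \<Sum>i\<in>S. f i)"
proof -
  let ?C = "{S. irreducible_trapping_set P S}"
  have "(\<Sum>i\<in>UNIV. f i) = (\<Sum>i\<in>\<Union>?C. f i)"
    by (rule sum.mono_neutral_right) (use assms in auto)
  also have "\<dots> = (\<Sum>S\<in>?C. \<Sum>i\<in>S. f i)"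
    using sum.Union_disjoint[of ?C f] irreducible_trapping_set_eq[of P] by auto
  finally show ?thesis .
qed

lemma sum_powr_scaled:
  fixes v q :: "'a \<Rightarrow> real"
  assumes "0 \<le> t" "\<forall>i\<in>S. v i = t * q i"
  shows "(\<Sum>i\<in>S. \<bar>v i\<bar> powr p) = t powr p * (\<Sum>i\<in>S. \<bar>q i\<bar> powr p)"
  using assms by (simp add: abs_mult powr_mult sum_distrib_left)

definition saturation_level :: "real^'n \<Rightarrow> ('n \<Rightarrow> real) \<Rightarrow> 'n set \<Rightarrow> real" where
  "saturation_level w q S = Min ((\<lambda>i. w$i / q i) ` S)"

lemma saturation_level_le:
  fixes S :: "'n::finite set"
  shows "i \<in> S \<Longrightarrow> saturation_level w q S \<le> w$i / q i"
  by (simp add: saturation_level_def)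

lemma le_saturation_level:
  fixes S :: "'n::finite set"
  assumes "S \<noteq> {}" "\<forall>i\<in>S. 0 < q i" "\<forall>i\<in>S. t * q i \<le> w$i"
  shows "t \<le> saturation_level w q S"
  using assms by (simp add: saturation_level_def pos_le_divide_eq)

lemma saturation_level_nonneg:
  fixes S :: "'n::finite set"
  assumes "S \<noteq> {}" "\<forall>i\<in>S. 0 < q i" "\<forall>i\<in>S. 0 \<le> w$i"
  shows "0 \<le> saturation_level w q S"
  using le_saturation_level[of S q 0 w] assms by simp

lemma invariant_sum_powr_le_on_irreducible:
  fixes P :: "real^'n^'n"
  assumes P: "substochastic P" and d_nonneg: "\<And>i. 0 \<le> d i" and d_le: "\<And>i. d i \<le> w$i"
    and inv: "invariant_on P UNIV d" and irr: "irreducible_trapping_set P S"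
    and q: "invariant_prob P S q" and p: "0 \<le> p"
  shows "(\<Sum>i\<in>S. \<bar>d i\<bar> powr p) \<le> saturation_level w q S powr p * (\<Sum>i\<in>S. \<bar>q i\<bar> powr p)"
proof -
  obtain t where t: "0 \<le> t" "\<forall>i\<in>S. d i = t * q i"
    using irreducible_invariant_proportional[OF substochastic_nonneg[OF P] irr q]
      invariant_on_irreducible[OF P d_nonneg inv irr] d_nonneg by blast
  have "S \<noteq> {}" using irr by (simp add: irreducible_trapping_set_def trapping_set_def)
  moreover have "\<forall>i\<in>S. 0 < q i"
    using invariant_prob_pos[OF substochastic_nonneg[OF P] irr q] by blast
  moreover have "\<forall>i\<in>S. t * q i \<le> w$i" using d_le by (simp add: t(2)[rule_format, symmetric])
  ultimately have "t \<le> saturation_level w q S" by (rule le_saturation_level)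
  then show ?thesis
    using sum_powr_scaled[OF t] t(1) p by (simp add: mult_right_mono powr_mono2 sum_nonneg)
qed

definition gap_bound :: "real^'n^'n \<Rightarrow> real^'n \<Rightarrow> ('n set \<Rightarrow> 'n \<Rightarrow> real) \<Rightarrow> real \<Rightarrow> real" where
  "gap_bound P w \<pi> p =
     (\<Sum>S\<in>{S. irreducible_trapping_set P S}.
        saturation_level w (\<pi> S) S powr p * (\<Sum>i\<in>S. \<bar>\<pi> S i\<bar> powr p))"

lemma subinvariant_sum_powr_le_gap_bound:
  fixes P :: "real^'n^'n"
  assumes P: "substochastic P"
    and \<pi>: "\<forall>S. irreducible_trapping_set P S \<longrightarrow> invariant_prob P S (\<pi> S)"
    and d_nonneg: "\<And>i. 0 \<le> d i" and d_le: "\<And>i. d i \<le> w$i"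
    and sub: "\<And>j. d j \<le> (\<Sum>i\<in>UNIV. P$i$j * d i)" and p: "0 \<le> p"
  shows "(\<Sum>i\<in>UNIV. \<bar>d i\<bar> powr p) \<le> gap_bound P w \<pi> p"
proof -
  have inv: "invariant_on P UNIV d" by (rule subinvariant_imp_invariant[OF P d_nonneg sub])
  have d_zero: "d i = 0" if "\<forall>S. irreducible_trapping_set P S \<longrightarrow> i \<notin> S" for i
  proof (rule ccontr)
    assume "d i \<noteq> 0"
    then have "0 < d i" using d_nonneg[of i] by simp
    then show False using invariant_support_in_irreducible[OF P d_nonneg inv] that by blast
  qed
  have "(\<Sum>i\<in>UNIV. \<bar>d i\<bar> powr p) = (\<Sum>S\<in>{S. irreducible_trapping_set P S}. \<Sum>i\<in>S. \<bar>d i\<bar> powr p)"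
    by (rule sum_over_irreducible_trapping_sets) (simp add: d_zero)
  also have "\<dots> \<le> gap_bound P w \<pi> p"
    unfolding gap_bound_def
  proof (rule sum_mono)
    fix S assume "S \<in> {S. irreducible_trapping_set P S}"
    then have S: "irreducible_trapping_set P S" by simp
    show "(\<Sum>i\<in>S. \<bar>d i\<bar> powr p) \<le> saturation_level w (\<pi> S) S powr p * (\<Sum>i\<in>S. \<bar>\<pi> S i\<bar> powr p)"
      by (rule invariant_sum_powr_le_on_irreducible[OF P d_nonneg d_le inv S \<pi>[rule_format, OF S] p])
  qed
  finally show ?thesis .
qed

section \<open>Solutions of the saturated equation\<close>

lemma vector_matrix_mult_nth:
  fixes P :: "'a::comm_semiring_1^'n^'m"
  shows "(x v* P)$j = (\<Sum>i\<in>UNIV. P$i$j * x$i)"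
  by (simp add: vector_matrix_mult_def mult.commute)

lemma is_solution_nth:
  assumes "is_solution P w c x"
  shows "x$j = min (max ((\<Sum>i\<in>UNIV. P$i$j * x$i) + c$j) 0) (w$j)"
proof -
  have "x$j = sat0 w (transpose P *v x + c) $ j" using assms by (metis is_solution_def)
  then show ?thesis by (simp add: sat0_def vector_matrix_mult_nth)
qed

lemma is_solution_bounds:
  assumes "0 \<le> w$i" "is_solution P w c x"
  shows "0 \<le> x$i" "x$i \<le> w$i"
  using assms is_solution_nth[OF assms(2), of i] by linarith+

lemma sat_nonexpansive: "min (max (a::real) 0) w - min (max b 0) w \<le> \<bar>a - b\<bar>"
  by (simp add: min_def max_def abs_if)

lemma solution_gap_subinvariant:
  fixes P :: "real^'n^'n"
  assumes nonneg: "\<And>i j. 0 \<le> P$i$j"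
    and x: "is_solution P w c x" and y: "is_solution P w c y" and "vec_le y x"
  shows "x$j - y$j \<le> (\<Sum>i\<in>UNIV. P$i$j * (x$i - y$i))"
proof -
  have diff: "((\<Sum>i\<in>UNIV. P$i$j * x$i) + c$j) - ((\<Sum>i\<in>UNIV. P$i$j * y$i) + c$j)
      = (\<Sum>i\<in>UNIV. P$i$j * (x$i - y$i))"
    by (simp add: right_diff_distrib sum_subtractf)
  have "0 \<le> (\<Sum>i\<in>UNIV. P$i$j * (x$i - y$i))"
    using nonneg \<open>vec_le y x\<close> by (simp add: vec_le_def sum_nonneg)
  moreover have "x$j - y$j \<le> \<bar>((\<Sum>i\<in>UNIV. P$i$j * x$i) + c$j) - ((\<Sum>i\<in>UNIV. P$i$j * y$i) + c$j)\<bar>"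
    unfolding is_solution_nth[OF x, of j] is_solution_nth[OF y, of j] by (rule sat_nonexpansive)
  ultimately show ?thesis using diff by simp
qed

lemma zero_is_solution: "(\<And>i. 0 \<le> w$i) \<Longrightarrow> is_solution P w 0 0"
  by (simp add: is_solution_def sat0_def vec_eq_iff)

lemma min_solution_zero:
  assumes w: "\<And>i. 0 \<le> w$i" and x: "is_min_solution P w 0 x"
  shows "x = 0"
proof -
  have "vec_le x 0" using x zero_is_solution[OF w] by (simp add: is_min_solution_def)
  moreover have "0 \<le> x$i" for i
    using x by (meson is_min_solution_def is_solution_bounds(1) w)
  ultimately show ?thesis by (auto simp: vec_le_def vec_eq_iff intro: order_antisym)
qed

lemma invariant_is_solution:
  assumes "\<And>j. 0 \<le> g$j" "\<And>j. g$j \<le> w$j" "invariant_on P UNIV (\<lambda>j. g$j)"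
  shows "is_solution P w 0 g"
  using assms by (simp add: is_solution_def vec_eq_iff sat0_def vector_matrix_mult_nth invariant_on_def)

lemma pnorm_pow_mono:
  assumes "0 \<le> p" "\<And>i. 0 \<le> x$i" "\<And>i. x$i \<le> y$i"
  shows "pnorm_pow p x \<le> pnorm_pow p y"
  unfolding pnorm_pow_def
proof (intro sum_mono powr_mono2)
  fix i
  have "0 \<le> y$i" using assms(2,3)[of i] by linarith
  then show "\<bar>x$i\<bar> \<le> \<bar>y$i\<bar>" using assms(2,3)[of i] by simp
qed (use assms in auto)

lemma solution_gap_le_gap_bound:
  fixes P :: "real^'n^'n"
  assumes P: "substochastic P" and w: "\<And>i. 0 \<le> w$i"
    and \<pi>: "\<forall>S. irreducible_trapping_set P S \<longrightarrow> invariant_prob P S (\<pi> S)" and p: "0 \<le> p"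
    and x: "is_solution P w c x" and y: "is_solution P w c y" and "vec_le y x"
  shows "pnorm_pow p (x - y) \<le> gap_bound P w \<pi> p"
proof -
  have "(\<Sum>i\<in>UNIV. \<bar>x$i - y$i\<bar> powr p) \<le> gap_bound P w \<pi> p"
  proof (rule subinvariant_sum_powr_le_gap_bound[OF P \<pi> _ _ _ p])
    show "0 \<le> x$i - y$i" for i using \<open>vec_le y x\<close> by (simp add: vec_le_def)
    show "x$i - y$i \<le> w$i" for i
      using is_solution_bounds[OF w[of i] x] is_solution_bounds[OF w[of i] y] by simp
    show "x$j - y$j \<le> (\<Sum>i\<in>UNIV. P$i$j * (x$i - y$i))" for j
      by (rule solution_gap_subinvariant[OF substochastic_nonneg[OF P] x y \<open>vec_le y x\<close>])
  qed
  then show ?thesis by (simp add: pnorm_pow_def)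
qed

section \<open>A solution attaining the bound\<close>

lemma invariant_on_scale: "invariant_on P S q \<Longrightarrow> invariant_on P S (\<lambda>i. t * q i)"
  by (simp add: invariant_on_def mult.left_commute flip: sum_distrib_left)

lemma extend_by_zero_invariant:
  fixes P :: "real^'n^'n"
  assumes nonneg: "\<And>i j. 0 \<le> P$i$j" and S: "link_closed P S" and q: "invariant_on P S q"
  shows "(\<Sum>i\<in>UNIV. P$i$j * (if i \<in> S then q i else 0)) = (if j \<in> S then q j else 0)"
proof -
  have "(\<Sum>i\<in>UNIV. P$i$j * (if i \<in> S then q i else 0)) = (\<Sum>i\<in>S. P$i$j * q i)"
    by (simp add: if_distrib sum.If_cases)
  also have "\<dots> = (if j \<in> S then q j else 0)"
    using q link_closed_entry_zero[OF nonneg S] by (auto simp: invariant_on_def)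
  finally show ?thesis .
qed

definition saturated_invariant ::
    "real^'n^'n \<Rightarrow> real^'n \<Rightarrow> ('n set \<Rightarrow> 'n \<Rightarrow> real) \<Rightarrow> real^'n" where
  "saturated_invariant P w \<pi> =
     (\<chi> j. \<Sum>S\<in>{S. irreducible_trapping_set P S}.
             if j \<in> S then saturation_level w (\<pi> S) S * \<pi> S j else 0)"

lemma saturated_invariant_nth_in:
  assumes "irreducible_trapping_set P S" "j \<in> S"
  shows "saturated_invariant P w \<pi> $ j = saturation_level w (\<pi> S) S * \<pi> S j"
proof -
  let ?C = "{S. irreducible_trapping_set P S}"
  have "saturated_invariant P w \<pi> $ j
      = (\<Sum>S'\<in>?C \<inter> {S'. j \<in> S'}. saturation_level w (\<pi> S') S' * \<pi> S' j)"
    by (simp add: saturated_invariant_def sum.If_cases)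
  also have "?C \<inter> {S'. j \<in> S'} = {S}"
    using irreducible_trapping_set_eq[of P _ S] assms by blast
  finally show ?thesis by simp
qed

lemma saturated_invariant_nth_out:
  "\<forall>S. irreducible_trapping_set P S \<longrightarrow> j \<notin> S \<Longrightarrow> saturated_invariant P w \<pi> $ j = 0"
  by (simp add: saturated_invariant_def)

lemma saturated_invariant_bounds:
  fixes P :: "real^'n^'n"
  assumes nonneg: "\<And>i j. 0 \<le> P$i$j" and w: "\<And>i. 0 \<le> w$i"
    and \<pi>: "\<forall>S. irreducible_trapping_set P S \<longrightarrow> invariant_prob P S (\<pi> S)"
  shows "0 \<le> saturated_invariant P w \<pi> $ j" "saturated_invariant P w \<pi> $ j \<le> w$j"
proof -
  have "0 \<le> saturated_invariant P w \<pi> $ j \<and> saturated_invariant P w \<pi> $ j \<le> w$j"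
  proof (cases "\<exists>S. irreducible_trapping_set P S \<and> j \<in> S")
    case True
    then obtain S where S: "irreducible_trapping_set P S" "j \<in> S" by blast
    have q_pos: "\<forall>i\<in>S. 0 < \<pi> S i" using invariant_prob_pos[OF nonneg S(1) \<pi>[rule_format, OF S(1)]] by blast
    have "0 \<le> saturation_level w (\<pi> S) S"
      using S q_pos w by (intro saturation_level_nonneg) auto
    moreover have "saturation_level w (\<pi> S) S * \<pi> S j \<le> w$j"
      using saturation_level_le[OF S(2), of w "\<pi> S"] q_pos S(2) by (simp add: pos_le_divide_eq)
    moreover have "0 \<le> \<pi> S j" using q_pos S(2) by (simp add: less_imp_le)
    ultimately show ?thesis using saturated_invariant_nth_in[OF S] by simp
  next
    case False
    then have "saturated_invariant P w \<pi> $ j = 0" by (intro saturated_invariant_nth_out) blast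
    then show ?thesis using w[of j] by simp
  qed
  then show "0 \<le> saturated_invariant P w \<pi> $ j" "saturated_invariant P w \<pi> $ j \<le> w$j" by auto
qed

lemma saturated_invariant_invariant:
  fixes P :: "real^'n^'n"
  assumes nonneg: "\<And>i j. 0 \<le> P$i$j"
    and \<pi>: "\<forall>S. irreducible_trapping_set P S \<longrightarrow> invariant_prob P S (\<pi> S)"
  shows "invariant_on P UNIV (\<lambda>j. saturated_invariant P w \<pi> $ j)"
proof -
  let ?C = "{S. irreducible_trapping_set P S}"
  let ?t = "\<lambda>S. saturation_level w (\<pi> S) S"
  have "(\<Sum>i\<in>UNIV. P$i$j * saturated_invariant P w \<pi> $ i) = saturated_invariant P w \<pi> $ j" for j
  proof -
    have "(\<Sum>i\<in>UNIV. P$i$j * saturated_invariant P w \<pi> $ i)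
        = (\<Sum>i\<in>UNIV. \<Sum>S\<in>?C. P$i$j * (if i \<in> S then ?t S * \<pi> S i else 0))"
      by (simp add: saturated_invariant_def sum_distrib_left)
    also have "\<dots> = (\<Sum>S\<in>?C. \<Sum>i\<in>UNIV. P$i$j * (if i \<in> S then ?t S * \<pi> S i else 0))"
      by (rule sum.swap)
    also have "\<dots> = (\<Sum>S\<in>?C. if j \<in> S then ?t S * \<pi> S j else 0)"
      using \<pi> extend_by_zero_invariant[OF nonneg _ invariant_on_scale]
      by (intro sum.cong) (auto simp: invariant_prob_iff irreducible_trapping_set_def trapping_set_iff_link_closed)
    also have "\<dots> = saturated_invariant P w \<pi> $ j"
      by (simp add: saturated_invariant_def)
    finally show ?thesis .
  qed
  then show ?thesis by (simp add: invariant_on_def)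
qed

lemma pnorm_pow_saturated_invariant:
  fixes P :: "real^'n^'n"
  assumes nonneg: "\<And>i j. 0 \<le> P$i$j" and w: "\<And>i. 0 \<le> w$i"
    and \<pi>: "\<forall>S. irreducible_trapping_set P S \<longrightarrow> invariant_prob P S (\<pi> S)"
  shows "pnorm_pow p (saturated_invariant P w \<pi>) = gap_bound P w \<pi> p"
proof -
  have "pnorm_pow p (saturated_invariant P w \<pi>)
      = (\<Sum>S\<in>{S. irreducible_trapping_set P S}. \<Sum>i\<in>S. \<bar>saturated_invariant P w \<pi> $ i\<bar> powr p)"
    unfolding pnorm_pow_def
    by (rule sum_over_irreducible_trapping_sets) (simp add: saturated_invariant_nth_out)
  also have "\<dots> = gap_bound P w \<pi> p"
    unfolding gap_bound_def
  proof (rule sum.cong)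
    fix S assume "S \<in> {S. irreducible_trapping_set P S}"
    then have S: "irreducible_trapping_set P S" by simp
    have "0 \<le> saturation_level w (\<pi> S) S"
      using S invariant_prob_pos[OF nonneg S \<pi>[rule_format, OF S]] w
      by (intro saturation_level_nonneg) (auto simp: irreducible_trapping_set_def trapping_set_def)
    then show "(\<Sum>i\<in>S. \<bar>saturated_invariant P w \<pi> $ i\<bar> powr p)
        = saturation_level w (\<pi> S) S powr p * (\<Sum>i\<in>S. \<bar>\<pi> S i\<bar> powr p)"
      using saturated_invariant_nth_in[OF S] by (intro sum_powr_scaled) auto
  qed simp
  finally show ?thesis .
qed

theorem corollary2:
  fixes P :: "real^'n^'n" and w :: "real^'n" and p :: real
    and xlo xhi :: "real^'n \<Rightarrow> real^'n"
    and \<pi> :: "'n set \<Rightarrow> 'n \<Rightarrow> real"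
  assumes "substochastic P"
    and "\<forall>i. 0 \<le> w$i"
    and "1 \<le> p"
    and "\<forall>c. is_min_solution P w c (xlo c)"
    and "\<forall>c. is_max_solution P w c (xhi c)"
    and "\<forall>S. irreducible_trapping_set P S \<longrightarrow> invariant_prob P S (\<pi> S)"
  shows "let R = (\<Sum>S\<in>{S. irreducible_trapping_set P S}.
                   (Min ((\<lambda>i. w$i / \<pi> S i) ` S)) powr p * (\<Sum>i\<in>S. \<bar>\<pi> S i\<bar> powr p))
         in (\<forall>c. pnorm_pow p (xhi c - xlo c) \<le> R) \<and> (\<exists>c. pnorm_pow p (xhi c - xlo c) = R)"
proof -
  have nonneg: "\<And>i j. 0 \<le> P$i$j" using assms(1) by (rule substochastic_nonneg)
  have w: "\<And>i. 0 \<le> w$i" and p: "0 \<le> p" using assms(2,3) by auto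
  note \<pi> = assms(6)
  have upper: "pnorm_pow p (xhi c - xlo c) \<le> gap_bound P w \<pi> p" for c
    using assms(4,5) solution_gap_le_gap_bound[OF assms(1) w \<pi> p]
    by (meson is_max_solution_def is_min_solution_def)
  let ?g = "saturated_invariant P w \<pi>"
  have "is_solution P w 0 ?g"
    using saturated_invariant_bounds[OF nonneg w \<pi>] saturated_invariant_invariant[OF nonneg \<pi>]
    by (intro invariant_is_solution) auto
  then have "vec_le ?g (xhi 0)" using assms(5) by (simp add: is_max_solution_def)
  moreover have "xlo 0 = 0" using min_solution_zero[OF w] assms(4) by blast
  ultimately have "pnorm_pow p ?g \<le> pnorm_pow p (xhi 0 - xlo 0)"
    by (intro pnorm_pow_mono[OF p]) (simp_all add: vec_le_def saturated_invariant_bounds[OF nonneg w \<pi>])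
  then have "gap_bound P w \<pi> p \<le> pnorm_pow p (xhi 0 - xlo 0)"
    by (simp add: pnorm_pow_saturated_invariant[OF nonneg w \<pi>])
  then have "(\<forall>c. pnorm_pow p (xhi c - xlo c) \<le> gap_bound P w \<pi> p)
      \<and> (\<exists>c. pnorm_pow p (xhi c - xlo c) = gap_bound P w \<pi> p)"
    using upper order_antisym by blast
  then show ?thesis by (simp add: Let_def gap_bound_def saturation_level_def)
qed

end
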